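(* Assume every $v_i$ is concave, differentiable, and homogeneous of degree 1. Let $\rho\in(0,1)$, let $q$ be a vector of optimal Lagrange multipliers for $(P_\rho)$, and let $p(y)=\rho(\sum_j q_j y_j)^{1/\rho}$. Then for any allocation $\mathbf{x}$ and multiplicities $\boldsymbol\eta$ such that $(\mathbf{x},p,\boldsymbol\eta)$ is a Sybil Walrasian equilibrium, every agent $i$ satisfies $v_i(x_i)\le\frac{\kappa}{1-\rho}$.
   Context: Setup: agents $N$, goods $M=\{1,\dots,m\}$ of supply 1; allocations $\mathbf{x}=(x_1,\dots,x_n)$, $x_i\in\mathbb{R}^m_{\ge0}$, $\sum_i x_{ij}\le1$. Valuations are monotone, $v_i(0)=0$, not identically zero; homogeneous of degree 1 means $v_i(\lambda y)=\lambda v_i(y)$. Program $(P_\rho)$: maximize $\frac1\rho\sum_i v_i(x_i)^\rho$ s.t. $\mathbf{x}\ge0$, $\sum_i x_{ij}\le1$; $q\in\mathbb{R}^m_{\ge0}$ is a vector of optimal Lagrange multipliers if for some optimal $\mathbf{x}$: $v_i(x_i)^{\rho-1}\partial v_i(x_i)/\partial x_{ij}\le q_j$ for all $i,j$ with equality when $x_{ij}>0$, and $q_j=0$ whenever $\sum_i x_{ij}<1$. Sybil model: identity creation cost $\kappa\ge0$; utility $u_i(y,\eta_i)=v_i(\eta_i y)-\eta_i p(y)-\eta_i\kappa$ for bundle $y$ per identity and multiplicity $\eta_i\in\mathbb{Z}_{>0}$; Sybil demand set $D^S_i(p)=\arg\max_{y,\eta_i}u_i(y,\eta_i)$. Good $j$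 has nonzero cost under $p$ if some bundle $y$ with $y_\ell=0$ for $\ell\ne j$ has $p(y)>0$. $(\mathbf{x},p,\boldsymbol\eta)$ is a Sybil Walrasian equilibrium if $(x_i,\eta_i)\in D^S_i(p)$ for all $i$, $\sum_i x_{ij}\le1$ for all $j$, and $\sum_i x_{ij}=1$ for every good $j$ of nonzero cost. *)

theory Defs
  imports "HOL-Analysis.Analysis"
begin

text \<open>Agents are the elements of a finite type 'n, goods the elements of a finite
  type 'm; a bundle is a vector in real^'m.\<close>

definition orthant :: "(real^'m) set" where
  "orthant = {y. \<forall>j. 0 \<le> y $ j}"

definition valuation :: "(real^'m \<Rightarrow> real) \<Rightarrow> bool" where
  "valuation v \<longleftrightarrow> v 0 = 0 \<and>
     (\<forall>y\<in>orthant. \<forall>y'\<in>orthant. y \<le> y' \<longrightarrow> v y \<le> v y') \<and>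
     (\<exists>y\<in>orthant. v y \<noteq> 0)"

definition homogeneous1 :: "(real^'m \<Rightarrow> real) \<Rightarrow> bool" where
  "homogeneous1 v \<longleftrightarrow> (\<forall>l::real. \<forall>y\<in>orthant. 0 \<le> l \<longrightarrow> v (l *\<^sub>R y) = l * v y)"

definition feasible_alloc :: "('n::finite \<Rightarrow> real^'m) \<Rightarrow> bool" where
  "feasible_alloc x \<longleftrightarrow> (\<forall>i. x i \<in> orthant) \<and> (\<forall>j. (\<Sum>i\<in>UNIV. x i $ j) \<le> 1)"

definition P_obj :: "real \<Rightarrow> ('n::finite \<Rightarrow> real^'m \<Rightarrow> real) \<Rightarrow> ('n \<Rightarrow> real^'m) \<Rightarrow> real" where
  "P_obj \<rho> v x = (\<Sum>i\<in>UNIV. (1 / \<rho>) * (v i (x i)) powr \<rho>)"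

definition optimal_P :: "real \<Rightarrow> ('n::finite \<Rightarrow> real^'m \<Rightarrow> real) \<Rightarrow> ('n \<Rightarrow> real^'m) \<Rightarrow> bool" where
  "optimal_P \<rho> v x \<longleftrightarrow> feasible_alloc x \<and>
     (\<forall>x'. feasible_alloc x' \<longrightarrow> P_obj \<rho> v x' \<le> P_obj \<rho> v x)"

text \<open>Partial derivative of v at y w.r.t. good j (derivative taken within the orthant,
  which is the domain of the valuations).\<close>
definition pderiv_v :: "(real^'m \<Rightarrow> real) \<Rightarrow> real^'m \<Rightarrow> 'm \<Rightarrow> real" where
  "pderiv_v v y j = frechet_derivative v (at y within orthant) (axis j 1)"

definition opt_lagrange_mult ::
  "real \<Rightarrow> ('n::finite \<Rightarrow> real^'m \<Rightarrow> real) \<Rightarrow> real^'m \<Rightarrow> bool" where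
  "opt_lagrange_mult \<rho> v q \<longleftrightarrow> (\<forall>j. 0 \<le> q $ j) \<and>
     (\<exists>x. optimal_P \<rho> v x \<and>
        (\<forall>i j. (v i (x i)) powr (\<rho> - 1) * pderiv_v (v i) (x i) j \<le> q $ j \<and>
               (0 < x i $ j \<longrightarrow> (v i (x i)) powr (\<rho> - 1) * pderiv_v (v i) (x i) j = q $ j)) \<and>
        (\<forall>j. (\<Sum>i\<in>UNIV. x i $ j) < 1 \<longrightarrow> q $ j = 0))"

definition sybil_utility ::
  "(real^'m \<Rightarrow> real) \<Rightarrow> real \<Rightarrow> (real^'m \<Rightarrow> real) \<Rightarrow> real^'m \<Rightarrow> nat \<Rightarrow> real" where
  "sybil_utility v \<kappa> p y \<eta> = v (real \<eta> *\<^sub>R y) - real \<eta> * p y - real \<eta> * \<kappa>"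

definition sybil_demand ::
  "(real^'m \<Rightarrow> real) \<Rightarrow> real \<Rightarrow> (real^'m \<Rightarrow> real) \<Rightarrow> ((real^'m) \<times> nat) set" where
  "sybil_demand v \<kappa> p = {(y, \<eta>). y \<in> orthant \<and> 0 < \<eta> \<and>
     (\<forall>y'\<in>orthant. \<forall>\<eta>'>0. sybil_utility v \<kappa> p y' \<eta>' \<le> sybil_utility v \<kappa> p y \<eta>)}"

definition nonzero_cost :: "(real^'m \<Rightarrow> real) \<Rightarrow> 'm \<Rightarrow> bool" where
  "nonzero_cost p j \<longleftrightarrow> (\<exists>y\<in>orthant. (\<forall>l. l \<noteq> j \<longrightarrow> y $ l = 0) \<and> 0 < p y)"

definition sybil_WE ::
  "('n::finite \<Rightarrow> real^'m \<Rightarrow> real) \<Rightarrow> real \<Rightarrow> ('n \<Rightarrow> real^'m) \<Rightarrow> (real^'m \<Rightarrow> real)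
     \<Rightarrow> ('n \<Rightarrow> nat) \<Rightarrow> bool" where
  "sybil_WE v \<kappa> x p \<eta> \<longleftrightarrow>
     (\<forall>i. (x i, \<eta> i) \<in> sybil_demand (v i) \<kappa> p) \<and>
     (\<forall>j. (\<Sum>i\<in>UNIV. x i $ j) \<le> 1) \<and>
     (\<forall>j. nonzero_cost p j \<longrightarrow> (\<Sum>i\<in>UNIV. x i $ j) = 1)"

end

theory Submission
  imports Defs
begin

text \<open>For a homogeneous valuation, an agent demanding \<open>\<eta>\<close> copies of \<open>y\<close> earns
  \<open>\<eta> (t v(y) - p(t y) - \<kappa>)\<close> if it scales its bundle by \<open>t\<close>. Optimality in \<open>t\<close> at \<open>t = 1\<close>
  gives the first-order condition \<open>v(y) = p(y) / \<rho>\<close>, because the price \<open>p\<close> is homogeneous of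
  degree \<open>1/\<rho>\<close>; optimality in \<open>\<eta>\<close> forces the per-identity surplus \<open>v(y) - p(y) - \<kappa>\<close> to be
  nonpositive, since otherwise one more identity would pay. Together,
  \<open>(1 - \<rho>) v(y) \<le> \<kappa>\<close>.\<close>

lemma sybil_utility_scaled:
  assumes "homogeneous1 v" "y \<in> orthant" "0 \<le> t"
  shows "sybil_utility v \<kappa> p (t *\<^sub>R y) \<eta> = real \<eta> * (t * v y - p (t *\<^sub>R y) - \<kappa>)"
proof -
  have "v (real \<eta> *\<^sub>R t *\<^sub>R y) = real \<eta> * t * v y"
    using assms unfolding homogeneous1_def by (simp add: scaleR_scaleR)
  then show ?thesis
    unfolding sybil_utility_def by (simp add: algebra_simps)
qed

lemma sybil_demandD:
  assumes "(y, \<eta>) \<in> sybil_demand v \<kappa> p"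
  shows "y \<in> orthant" "0 < \<eta>"
    and "\<And>y' \<eta>'. y' \<in> orthant \<Longrightarrow> 0 < \<eta>' \<Longrightarrow>
           sybil_utility v \<kappa> p y' \<eta>' \<le> sybil_utility v \<kappa> p y \<eta>"
  using assms unfolding sybil_demand_def by auto

lemma sybil_demand_surplus_nonpos:
  assumes "homogeneous1 v" "(y, \<eta>) \<in> sybil_demand v \<kappa> p"
  shows "v y - p y - \<kappa> \<le> 0"
proof -
  note demand = sybil_demandD[OF assms(2)]
  have "sybil_utility v \<kappa> p (1 *\<^sub>R y) (Suc \<eta>) \<le> sybil_utility v \<kappa> p (1 *\<^sub>R y) \<eta>"
    using demand by simp
  then have "real (Suc \<eta>) * (v y - p y - \<kappa>) \<le> real \<eta> * (v y - p y - \<kappa>)"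
    using sybil_utility_scaled[OF assms(1) demand(1), of 1] by simp
  then show ?thesis
    by (simp add: algebra_simps)
qed

lemma sybil_demand_scaling_optimal:
  assumes "homogeneous1 v" "(y, \<eta>) \<in> sybil_demand v \<kappa> p" "0 \<le> t"
  shows "t * v y - p (t *\<^sub>R y) \<le> v y - p y"
proof -
  note demand = sybil_demandD[OF assms(2)]
  have "t *\<^sub>R y \<in> orthant"
    using demand(1) assms(3) unfolding orthant_def by simp
  then have "sybil_utility v \<kappa> p (t *\<^sub>R y) \<eta> \<le> sybil_utility v \<kappa> p (1 *\<^sub>R y) \<eta>"
    using demand by simp
  then have "real \<eta> * (t * v y - p (t *\<^sub>R y) - \<kappa>) \<le> real \<eta> * (1 * v y - p (1 *\<^sub>R y) - \<kappa>)"
    using assms(1,3) demand(1) by (simp only: sybil_utility_scaled zero_le_one)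
  then show ?thesis
    using demand(2) by simp
qed

lemma sybil_demand_value_eq_price_degree:
  assumes "homogeneous1 v" "(y, \<eta>) \<in> sybil_demand v \<kappa> p"
    and p_ray: "\<And>t. 0 < t \<Longrightarrow> p (t *\<^sub>R y) = t powr r * p y"
  shows "v y = r * p y"
proof -
  define f where "f t = t * v y - t powr r * p y" for t :: real
  have deriv: "(f has_real_derivative v y - r * p y) (at 1)"
    unfolding f_def by (auto intro!: derivative_eq_intros)
  have local_max: "\<forall>t. \<bar>1 - t\<bar> < 1 \<longrightarrow> f t \<le> f 1"
  proof (intro allI impI)
    fix t :: real
    assume "\<bar>1 - t\<bar> < 1"
    then have "0 < t" by simp
    then show "f t \<le> f 1"
      using sybil_demand_scaling_optimal[OF assms(1,2), of t] p_ray[of t]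
      unfolding f_def by simp
  qed
  show ?thesis
    using DERIV_local_max[OF deriv zero_less_one local_max] by simp
qed

lemma linear_powr_scaled:
  fixes q y :: "real^'m::finite"
  assumes "\<And>j. 0 \<le> q $ j" "y \<in> orthant" "0 \<le> t"
  shows "(\<Sum>j\<in>UNIV. q $ j * (t *\<^sub>R y) $ j) powr r = t powr r * (\<Sum>j\<in>UNIV. q $ j * y $ j) powr r"
proof -
  have "(\<Sum>j\<in>UNIV. q $ j * (t *\<^sub>R y) $ j) = t * (\<Sum>j\<in>UNIV. q $ j * y $ j)"
    by (simp add: sum_distrib_left algebra_simps)
  moreover have "0 \<le> (\<Sum>j\<in>UNIV. q $ j * y $ j)"
    using assms(1,2) unfolding orthant_def by (simp add: sum_nonneg)
  ultimately show ?thesis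
    using assms(3) by (simp add: powr_mult)
qed

theorem mainTheorem9:
  fixes v :: "'n::finite \<Rightarrow> real^'m::finite \<Rightarrow> real"
    and \<rho> \<kappa> :: real and q :: "real^'m"
    and p :: "real^'m \<Rightarrow> real"
    and x :: "'n \<Rightarrow> real^'m" and \<eta> :: "'n \<Rightarrow> nat"
  assumes val: "\<And>i. valuation (v i)"
    and conc: "\<And>i. concave_on orthant (v i)"
    and diff: "\<And>i y. y \<in> orthant \<Longrightarrow> v i differentiable (at y within orthant)"
    and hom: "\<And>i. homogeneous1 (v i)"
    and rho: "0 < \<rho>" "\<rho> < 1"
    and kappa: "0 \<le> \<kappa>"
    and q: "opt_lagrange_mult \<rho> v q"
    and p_def: "p = (\<lambda>y. \<rho> * (\<Sum>j\<in>UNIV. q $ j * y $ j) powr (1 / \<rho>))"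
    and WE: "sybil_WE v \<kappa> x p \<eta>"
  shows "\<forall>i. v i (x i) \<le> \<kappa> / (1 - \<rho>)"
proof
  fix i
  have demand: "(x i, \<eta> i) \<in> sybil_demand (v i) \<kappa> p"
    using WE unfolding sybil_WE_def by blast
  have q_nonneg: "\<And>j. 0 \<le> q $ j"
    using q unfolding opt_lagrange_mult_def by blast
  have "p (t *\<^sub>R x i) = t powr (1 / \<rho>) * p (x i)" if "0 < t" for t
    using linear_powr_scaled[OF q_nonneg sybil_demandD(1)[OF demand], of t] that
    unfolding p_def by simp
  then have "v i (x i) = p (x i) / \<rho>"
    using sybil_demand_value_eq_price_degree[OF hom demand, of "1 / \<rho>"] by simp
  moreover have "v i (x i) - p (x i) - \<kappa> \<le> 0"
    using sybil_demand_surplus_nonpos[OF hom demand] .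
  ultimately have "(1 - \<rho>) * v i (x i) \<le> \<kappa>"
    using rho by (simp add: field_simps)
  then show "v i (x i) \<le> \<kappa> / (1 - \<rho>)"
    using rho by (simp add: pos_le_divide_eq mult.commute)
qed

end
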